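(* Let $A$ be a finitely generated algebra over $B=\bigoplus_{s=1}^K\Bbbk e_s$, $\alpha\in\mathbb N^K$, $N=\sum_s\alpha_s$, $R=\mathcal O(\operatorname{Rep}(A,\alpha))$, and $Q\in(D_BA)_3$ with associated differential triple bracket $\{\!\{-,-,-\}\!\}_Q$. Then for all $a,b,c\in A$ and $1\le i,j,k,l,u,v\le N$, $$\operatorname{tr}\mathcal X(Q)(a_{ij},b_{kl},c_{uv})=(\{\!\{a,b,c\}\!\}_Q)_{uj,il,kv}-(\{\!\{a,c,b\}\!\}_Q)_{kj,iv,ul},$$ where for $x=x'\otimes x''\otimes x'''\in A^{\otimes3}$ we write $x_{pq,rs,yz}=x'_{pq}x''_{rs}x'''_{yz}$ (extended linearly).
   Context: $\Bbbk$ field of characteristic $0$, $\otimes=\otimes_\Bbbk$, $(e_s)$ complete orthogonal idempotents. $R$ is the commutative $\Bbbk$-algebra generated by $a_{ij}$ ($a\in A$, $1\le i,j\le N$) with $(a+b)_{ij}=a_{ij}+b_{ij}$, $(ab)_{ij}=\sum_ka_{ik}b_{kj}$, and $(e_s)_{ij}=\delta_{ij}$ if $\alpha_1+\cdots+\alpha_{s-1}<i,j\le\alpha_1+\cdots+\alpha_s$, $0$ otherwise. $D_{A/B}=\operatorname{Der}_B(A,A\otimes A)$ (outer structure $x(d'\otimes d'')y=xd'\otimes d''y$) with bimodule structure $(b\delta c)(a)=\delta(a)'c\otimes b\delta(a)''$; $D_BA=T_AD_{A/B}$. For $\delta\in D_{A/B}$, $\delta_{ij}\in\operatorname{Der}(R)$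 with $\delta_{ij}(b_{kl})=\delta(b)'_{kj}\delta(b)''_{il}$; for $Q=\delta_1\delta_2\delta_3$, $\mathcal X(Q)=\mathcal X(\delta_1)\mathcal X(\delta_2)\mathcal X(\delta_3)$ as matrices with entries in $\bigwedge^3_R\operatorname{Der}(R)$, $\operatorname{tr}\mathcal X(Q)=\sum_i\mathcal X(Q)_{ii}$, extended linearly; $(\xi_1\wedge\xi_2\wedge\xi_3)(f_1,f_2,f_3)=\sum_{\sigma\in S_3}\epsilon(\sigma)\xi_1(f_{\sigma(1)})\xi_2(f_{\sigma(2)})\xi_3(f_{\sigma(3)})$. With $\tau=\tau_{(123)}$, $\tau(x_1\otimes x_2\otimes x_3)=x_3\otimes x_1\otimes x_2$, $\{\!\{-,-,-\}\!\}_Q=\sum_{i=0}^{2}\tau^i\circ\widetilde{\{\!\{\}\!\}}_Q\circ\tau^{-i}$ with $\widetilde{\{\!\{a_1,a_2,a_3\}\!\}}_Q=\delta_3(a_3)'\delta_1(a_1)''\otimes\delta_1(a_1)'\delta_2(a_2)''\otimes\delta_2(a_2)'\delta_3(a_3)''$, extended linearly in $Q$ ($\tau^{-i}$ acting on the argument triple by the same cyclic permutation). *)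

theory Defs
  imports Complex_Main "HOL-Library.Poly_Mapping" "HOL-Combinatorics.Permutations"
begin

definition kalg :: "('k::field \<Rightarrow> 'a::ring_1 \<Rightarrow> 'a) \<Rightarrow> bool" where
  "kalg smult \<longleftrightarrow> vector_space smult \<and>
     (\<forall>c x y. smult c (x * y) = smult c x * y \<and> smult c (x * y) = x * smult c y)"

inductive_set alg_gen :: "('k \<Rightarrow> 'a::ring_1 \<Rightarrow> 'a) \<Rightarrow> 'a set \<Rightarrow> 'a set"
  for smult S where
  gen: "x \<in> S \<Longrightarrow> x \<in> alg_gen smult S"
| one: "1 \<in> alg_gen smult S"
| add: "x \<in> alg_gen smult S \<Longrightarrow> y \<in> alg_gen smult S \<Longrightarrow> x + y \<in> alg_gen smult S"
| mult: "x \<in> alg_gen smult S \<Longrightarrow> y \<in> alg_gen smult S \<Longrightarrow> x * y \<in> alg_gen smult S"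
| smult: "x \<in> alg_gen smult S \<Longrightarrow> smult c x \<in> alg_gen smult S"

text \<open>e 1, ..., e K is a complete family of nonzero orthogonal idempotents, so that
B = span (e 1 .. e K) is the subalgebra (direct sum of K copies of k).\<close>
definition idem_family :: "(nat \<Rightarrow> 'a::ring_1) \<Rightarrow> nat \<Rightarrow> bool" where
  "idem_family e K \<longleftrightarrow>
     (\<forall>s\<in>{1..K}. \<forall>t\<in>{1..K}. e s * e t = (if s = t then e s else 0)) \<and>
     (\<Sum>s=1..K. e s) = 1 \<and> (\<forall>s\<in>{1..K}. e s \<noteq> 0)"

definition fin_gen_over_B :: "('k \<Rightarrow> 'a::ring_1 \<Rightarrow> 'a) \<Rightarrow> (nat \<Rightarrow> 'a) \<Rightarrow> nat \<Rightarrow> bool" where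
  "fin_gen_over_B smult e K \<longleftrightarrow> (\<exists>S. finite S \<and> alg_gen smult (S \<union> e ` {1..K}) = UNIV)"

text \<open>An element of A \<otimes> A is represented by a finite formal sum (a list) of elementary
tensors x' \<otimes> x''. Two representatives denote the same tensor iff they agree under all
pairs of k-linear functionals (for vector spaces over a field, A \<otimes> A embeds into the
space of bilinear forms on the dual).\<close>
definition teq :: "('k::field \<Rightarrow> 'a::ab_group_add \<Rightarrow> 'a) \<Rightarrow> ('a \<times> 'a) list \<Rightarrow> ('a \<times> 'a) list \<Rightarrow> bool" where
  "teq smult x y \<longleftrightarrow>
     (\<forall>f g. Vector_Spaces.linear smult (*) f \<longrightarrow> Vector_Spaces.linear smult (*) g \<longrightarrow>
        (\<Sum>(p, q)\<leftarrow>x. f p * g q) = (\<Sum>(p, q)\<leftarrow>y. f p * g q))"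

text \<open>Double derivations: D_{A/B} = Der_B(A, A \<otimes> A) with the outer bimodule structure
  x (d' \<otimes> d'') y = x d' \<otimes> d'' y.\<close>
definition dder :: "('k::field \<Rightarrow> 'a::ring_1 \<Rightarrow> 'a) \<Rightarrow> (nat \<Rightarrow> 'a) \<Rightarrow> nat
    \<Rightarrow> ('a \<Rightarrow> ('a \<times> 'a) list) \<Rightarrow> bool" where
  "dder smult e K \<delta> \<longleftrightarrow>
     (\<forall>x y. teq smult (\<delta> (x + y)) (\<delta> x @ \<delta> y)) \<and>
     (\<forall>c x. teq smult (\<delta> (smult c x)) (map (\<lambda>(p, q). (smult c p, q)) (\<delta> x))) \<and>
     (\<forall>x y. teq smult (\<delta> (x * y))
        (map (\<lambda>(p, q). (p, q * y)) (\<delta> x) @ map (\<lambda>(p, q). (x * p, q)) (\<delta> y))) \<and>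
     (\<forall>s\<in>{1..K}. teq smult (\<delta> (e s)) [])"

text \<open>R is the quotient of the polynomial ring over k in the variables X(a,i,j)
(a \<in> A) by the ideal rep_ideal; equality in R is congruence modulo rep_ideal.
Variables with indices outside 1..N are set to zero.\<close>

type_synonym ('a, 'k) rpoly = "(('a \<times> nat \<times> nat) \<Rightarrow>\<^sub>0 nat) \<Rightarrow>\<^sub>0 'k"

definition Xv :: "'a \<Rightarrow> nat \<Rightarrow> nat \<Rightarrow> ('a, 'k::comm_ring_1) rpoly" where
  "Xv a i j = Poly_Mapping.single (Poly_Mapping.single (a, i, j) 1) 1"

definition Cst :: "'k::comm_ring_1 \<Rightarrow> ('a, 'k) rpoly" where
  "Cst c = Poly_Mapping.single 0 c"

definition ideal_gen :: "'r::comm_ring_1 set \<Rightarrow> 'r set" where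
  "ideal_gen G = {(\<Sum>g\<in>F. r g * g) | F r. finite F \<and> F \<subseteq> G}"

definition dimN :: "(nat \<Rightarrow> nat) \<Rightarrow> nat \<Rightarrow> nat" where
  "dimN \<alpha> K = (\<Sum>s=1..K. \<alpha> s)"

definition in_block :: "(nat \<Rightarrow> nat) \<Rightarrow> nat \<Rightarrow> nat \<Rightarrow> bool" where
  "in_block \<alpha> s i \<longleftrightarrow> (\<Sum>t=1..<s. \<alpha> t) < i \<and> i \<le> (\<Sum>t=1..s. \<alpha> t)"

definition rep_relations :: "('k::field \<Rightarrow> 'a::ring_1 \<Rightarrow> 'a) \<Rightarrow> (nat \<Rightarrow> 'a) \<Rightarrow> nat
    \<Rightarrow> (nat \<Rightarrow> nat) \<Rightarrow> ('a, 'k) rpoly set" where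
  "rep_relations smult e K \<alpha> =
     (let N = dimN \<alpha> K in
      {Xv (a + b) i j - Xv a i j - Xv b i j | a b i j. i \<in> {1..N} \<and> j \<in> {1..N}} \<union>
      {Xv (smult c a) i j - Cst c * Xv a i j | c a i j. i \<in> {1..N} \<and> j \<in> {1..N}} \<union>
      {Xv (a * b) i j - (\<Sum>m=1..N. Xv a i m * Xv b m j) | a b i j. i \<in> {1..N} \<and> j \<in> {1..N}} \<union>
      {Xv (e s) i j - (if i = j \<and> in_block \<alpha> s i \<and> in_block \<alpha> s j then 1 else 0) | s i j.
          s \<in> {1..K} \<and> i \<in> {1..N} \<and> j \<in> {1..N}} \<union>
      {Xv a i j | a i j. i \<notin> {1..N} \<or> j \<notin> {1..N}})"

definition rep_ideal :: "('k::field \<Rightarrow> 'a::ring_1 \<Rightarrow> 'a) \<Rightarrow> (nat \<Rightarrow> 'a) \<Rightarrow> nat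
    \<Rightarrow> (nat \<Rightarrow> nat) \<Rightarrow> ('a, 'k) rpoly set" where
  "rep_ideal smult e K \<alpha> = ideal_gen (rep_relations smult e K \<alpha>)"

definition coord2 :: "('a \<times> 'a) list \<Rightarrow> nat \<Rightarrow> nat \<Rightarrow> nat \<Rightarrow> nat \<Rightarrow> ('a, 'k::comm_ring_1) rpoly" where
  "coord2 x p q r s = (\<Sum>(x1, x2)\<leftarrow>x. Xv x1 p q * Xv x2 r s)"

definition coord3 :: "('a \<times> 'a \<times> 'a) list \<Rightarrow> nat \<Rightarrow> nat \<Rightarrow> nat \<Rightarrow> nat \<Rightarrow> nat \<Rightarrow> nat
    \<Rightarrow> ('a, 'k::comm_ring_1) rpoly" where
  "coord3 x p q r s y z = (\<Sum>(x1, x2, x3)\<leftarrow>x. Xv x1 p q * Xv x2 r s * Xv x3 y z)"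

text \<open>Value of the derivation delta_{ij} of R on the generator b_{kl}:
  delta_{ij}(b_{kl}) = delta(b)'_{kj} delta(b)''_{il}.\<close>
definition dij_gen :: "('a \<Rightarrow> ('a \<times> 'a) list) \<Rightarrow> nat \<Rightarrow> nat \<Rightarrow> 'a \<times> nat \<times> nat
    \<Rightarrow> ('a, 'k::comm_ring_1) rpoly" where
  "dij_gen \<delta> i j f = (case f of (b, k, l) \<Rightarrow> coord2 (\<delta> b) k j i l)"

definition wedge3_eval :: "('g \<Rightarrow> 'r::comm_ring_1) \<Rightarrow> ('g \<Rightarrow> 'r) \<Rightarrow> ('g \<Rightarrow> 'r)
    \<Rightarrow> 'g \<Rightarrow> 'g \<Rightarrow> 'g \<Rightarrow> 'r" where
  "wedge3_eval \<xi>1 \<xi>2 \<xi>3 f1 f2 f3 =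
     (\<Sum>\<sigma>\<in>{\<sigma>. \<sigma> permutes {0::nat,1,2}}.
        of_int (sign \<sigma>) * \<xi>1 ([f1, f2, f3] ! \<sigma> 0) * \<xi>2 ([f1, f2, f3] ! \<sigma> 1)
          * \<xi>3 ([f1, f2, f3] ! \<sigma> 2))"

text \<open>Q \<in> (D_B A)_3 given as a formal sum of products delta1 delta2 delta3;
 tr X(Q)(f1,f2,f3) = sum_i (X(d1) X(d2) X(d3))_{ii}(f1,f2,f3), extended linearly.\<close>
definition trX_eval :: "(nat \<Rightarrow> nat) \<Rightarrow> nat
    \<Rightarrow> (('a \<Rightarrow> ('a \<times> 'a) list) \<times> ('a \<Rightarrow> ('a \<times> 'a) list) \<times> ('a \<Rightarrow> ('a \<times> 'a) list)) list
    \<Rightarrow> 'a \<times> nat \<times> nat \<Rightarrow> 'a \<times> nat \<times> nat \<Rightarrow> 'a \<times> nat \<times> nat \<Rightarrow> ('a, 'k::comm_ring_1) rpoly" where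
  "trX_eval \<alpha> K Q f1 f2 f3 =
     (\<Sum>(d1, d2, d3)\<leftarrow>Q. \<Sum>i\<in>{1..dimN \<alpha> K}. \<Sum>m\<in>{1..dimN \<alpha> K}. \<Sum>n\<in>{1..dimN \<alpha> K}.
        wedge3_eval (dij_gen d1 i m) (dij_gen d2 m n) (dij_gen d3 n i) f1 f2 f3)"

definition tau3 :: "'a \<times> 'a \<times> 'a \<Rightarrow> 'a \<times> 'a \<times> 'a" where
  "tau3 x = (case x of (x1, x2, x3) \<Rightarrow> (x3, x1, x2))"

definition bracket_tilde :: "('a \<Rightarrow> ('a \<times> 'a) list) \<Rightarrow> ('a \<Rightarrow> ('a \<times> 'a) list)
    \<Rightarrow> ('a \<Rightarrow> ('a \<times> 'a) list) \<Rightarrow> 'a::ring_1 \<Rightarrow> 'a \<Rightarrow> 'a \<Rightarrow> ('a \<times> 'a \<times> 'a) list" where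
  "bracket_tilde d1 d2 d3 a1 a2 a3 =
     [(r1 * p2, p1 * q2, q1 * r2). (p1, p2) \<leftarrow> d1 a1, (q1, q2) \<leftarrow> d2 a2, (r1, r2) \<leftarrow> d3 a3]"

text \<open>sum_{i=0}^2 tau^i o tilde o tau^{-i}, where tau^{-1}(a1,a2,a3) = (a2,a3,a1).\<close>
definition bracketQ :: "(('a \<Rightarrow> ('a \<times> 'a) list) \<times> ('a \<Rightarrow> ('a \<times> 'a) list) \<times> ('a \<Rightarrow> ('a \<times> 'a) list)) list
    \<Rightarrow> 'a::ring_1 \<Rightarrow> 'a \<Rightarrow> 'a \<Rightarrow> ('a \<times> 'a \<times> 'a) list" where
  "bracketQ Q a1 a2 a3 = concat (map (\<lambda>(d1, d2, d3).
      bracket_tilde d1 d2 d3 a1 a2 a3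
      @ map tau3 (bracket_tilde d1 d2 d3 a2 a3 a1)
      @ map (tau3 \<circ> tau3) (bracket_tilde d1 d2 d3 a3 a1 a2)) Q)"

end

theory Submission
  imports Defs
begin

(* Evaluating the product of the derivation matrices delta1_{pm} delta2_{mn} delta3_{np} on
   generators x_{s1t1}, y_{s2t2}, z_{s3t3} and summing over p, m, n contracts delta3(z)' with
   delta1(x)'', delta1(x)' with delta2(y)'' and delta2(y)' with delta3(z)''.  Modulo the
   multiplication relations of R each contraction is the coordinate of the product in A, so the
   trace is a coordinate of the tilde bracket.  The six terms of the wedge product then match the
   three cyclic summands of the brackets {{a,b,c}} and {{a,c,b}}.  Only the multiplication
   relations of R enter: no property of the double derivations is needed. *)

(* Not a global interpretation: its simp rule a * (b * x) = (a * b) * x would loop with mult.assoc. *)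
lemma module_over_itself: "module ((*) :: 'r::comm_ring_1 \<Rightarrow> 'r \<Rightarrow> 'r)"
  by standard (simp_all add: algebra_simps)

lemma ideal_gen_eq_span: "ideal_gen G = module.span (*) G"
  unfolding ideal_gen_def module.span_explicit[OF module_over_itself] ..

lemmas ideal_gen_base = module.span_base[OF module_over_itself, folded ideal_gen_eq_span]
lemmas ideal_gen_zero = module.span_zero[OF module_over_itself, folded ideal_gen_eq_span]
lemmas ideal_gen_add = module.span_add[OF module_over_itself, folded ideal_gen_eq_span]
lemmas ideal_gen_minus = module.span_neg[OF module_over_itself, folded ideal_gen_eq_span]
lemmas ideal_gen_diff = module.span_diff[OF module_over_itself, folded ideal_gen_eq_span]
lemmas ideal_gen_mult_left = module.span_scale[OF module_over_itself, folded ideal_gen_eq_span]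

lemma ideal_gen_sum_list:
  "(\<And>x. x \<in> set xs \<Longrightarrow> f x \<in> ideal_gen G) \<Longrightarrow> sum_list (map f xs) \<in> ideal_gen G"
  by (induction xs) (auto intro: ideal_gen_zero ideal_gen_add)

lemma ideal_gen_mult3_diff:
  assumes "x - x' \<in> ideal_gen G" "y - y' \<in> ideal_gen G" "z - z' \<in> ideal_gen G"
  shows "x * y * z - x' * y' * z' \<in> ideal_gen G"
proof -
  have "x * y * z - x' * y' * z' = (y * z) * (x - x') + (x' * z) * (y - y') + (x' * y') * (z - z')"
    by (simp add: algebra_simps)
  then show ?thesis
    using assms by (simp only:) (intro ideal_gen_add ideal_gen_mult_left)
qed

lemma sum_list_sum_swap:
  "(\<Sum>s\<in>S. \<Sum>x\<leftarrow>xs. f x s) = (\<Sum>x\<leftarrow>xs. \<Sum>s\<in>S. f x s)"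
  by (induction xs) (simp_all add: sum.distrib)

lemma sum_list_map_concat:
  "sum_list (map f (concat xss)) = (\<Sum>xs\<leftarrow>xss. sum_list (map f xs))"
  by (induction xss) simp_all

lemma sum_list_mult3:
  fixes f :: "'x \<Rightarrow> 'r::semiring_0"
  shows "(\<Sum>x\<leftarrow>xs. f x) * (\<Sum>y\<leftarrow>ys. g y) * (\<Sum>z\<leftarrow>zs. h z) =
    (\<Sum>x\<leftarrow>xs. \<Sum>y\<leftarrow>ys. \<Sum>z\<leftarrow>zs. f x * g y * h z)"
  by (simp add: sum_list_const_mult sum_list_mult_const)

lemma sum_permutes_3:
  "(\<Sum>\<sigma>\<in>{\<sigma>. \<sigma> permutes {0::nat,1,2}}. f \<sigma>) =
     (\<Sum>b\<in>{0,1,2}. \<Sum>c\<in>{1,2}. f (transpose 0 b \<circ> transpose 1 c))"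
  by (simp add: sum_over_permutations_insert permutes_empty)

lemma sign_transpose_comp:
  "sign (transpose (a::nat) b \<circ> transpose c d) =
     (if a = b then 1 else -1) * (if c = d then 1 else -1)"
  by (simp add: sign_compose permutation_swap_id sign_swap_id)

lemma wedge3_eval_expand:
  "wedge3_eval \<xi>1 \<xi>2 \<xi>3 f1 f2 f3 =
     \<xi>1 f1 * \<xi>2 f2 * \<xi>3 f3 - \<xi>1 f1 * \<xi>2 f3 * \<xi>3 f2 - \<xi>1 f2 * \<xi>2 f1 * \<xi>3 f3
   + \<xi>1 f2 * \<xi>2 f3 * \<xi>3 f1 + \<xi>1 f3 * \<xi>2 f1 * \<xi>3 f2 - \<xi>1 f3 * \<xi>2 f2 * \<xi>3 f1"
  unfolding wedge3_eval_def sum_permutes_3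
  by (simp add: sign_transpose_comp transpose_def)

lemma Xv_mult_in_rep_ideal:
  assumes "s \<in> {1..dimN \<alpha> K}" "t \<in> {1..dimN \<alpha> K}"
  shows "(\<Sum>m=1..dimN \<alpha> K. Xv x s m * Xv y m t) - Xv (x * y) s t \<in> rep_ideal smult e K \<alpha>"
proof -
  have "Xv (x * y) s t - (\<Sum>m=1..dimN \<alpha> K. Xv x s m * Xv y m t) \<in> rep_relations smult e K \<alpha>"
    using assms unfolding rep_relations_def Let_def by blast
  then have "- (Xv (x * y) s t - (\<Sum>m=1..dimN \<alpha> K. Xv x s m * Xv y m t)) \<in> rep_ideal smult e K \<alpha>"
    unfolding rep_ideal_def by (intro ideal_gen_minus ideal_gen_base)
  then show ?thesis by simp
qed

lemma coord3_append: "coord3 (xs @ ys) p q r s y z = coord3 xs p q r s y z + coord3 ys p q r s y z"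
  unfolding coord3_def by simp

lemma coord3_tau3: "coord3 (map tau3 xs) p q r s y z = coord3 xs r s y z p q"
  unfolding coord3_def tau3_def by (simp add: case_prod_unfold o_def mult_ac)

lemma coord3_tau3_tau3: "coord3 (map (tau3 \<circ> tau3) xs) p q r s y z = coord3 xs y z p q r s"
  unfolding coord3_def tau3_def by (simp add: case_prod_unfold o_def mult_ac)

lemma coord3_bracket_tilde:
  "coord3 (bracket_tilde d1 d2 d3 x y z) p q r s g h =
    (\<Sum>(p1, p2)\<leftarrow>d1 x. \<Sum>(q1, q2)\<leftarrow>d2 y. \<Sum>(r1, r2)\<leftarrow>d3 z.
       Xv (r1 * p2) p q * Xv (p1 * q2) r s * Xv (q1 * r2) g h)"
  unfolding coord3_def bracket_tilde_def
  by (simp add: sum_list_map_concat o_def case_prod_unfold)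

lemma trace_dij_gen3_in_rep_ideal:
  fixes smult :: "'k::field \<Rightarrow> 'a::ring_1 \<Rightarrow> 'a"
  assumes "s1 \<in> {1..dimN \<alpha> K}" "t1 \<in> {1..dimN \<alpha> K}" "s2 \<in> {1..dimN \<alpha> K}"
    "t2 \<in> {1..dimN \<alpha> K}" "s3 \<in> {1..dimN \<alpha> K}" "t3 \<in> {1..dimN \<alpha> K}"
  shows "(\<Sum>p\<in>{1..dimN \<alpha> K}. \<Sum>m\<in>{1..dimN \<alpha> K}. \<Sum>n\<in>{1..dimN \<alpha> K}.
      dij_gen d1 p m (x, s1, t1) * dij_gen d2 m n (y, s2, t2) * dij_gen d3 n p (z, s3, t3))
    - coord3 (bracket_tilde d1 d2 d3 x y z) s3 t1 s1 t2 s2 t3 \<in> rep_ideal smult e K \<alpha>"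
proof -
  let ?S = "{1..dimN \<alpha> K}"
  define M where "M a b s t = (\<Sum>m\<in>?S. Xv a s m * Xv b m t :: ('a, 'k) rpoly)" for a b s t
  have factor: "(\<Sum>p\<in>?S. \<Sum>m\<in>?S. \<Sum>n\<in>?S.
      (Xv p1 s1 m * Xv p2 p t1) * (Xv q1 s2 n * Xv q2 m t2) * (Xv r1 s3 p * Xv r2 n t3))
    = M r1 p2 s3 t1 * M p1 q2 s1 t2 * M q1 r2 s2 t3" for p1 p2 q1 q2 r1 r2
    by (simp add: M_def sum_distrib_left sum_distrib_right mult_ac)
  have "(\<Sum>p\<in>?S. \<Sum>m\<in>?S. \<Sum>n\<in>?S.
      dij_gen d1 p m (x, s1, t1) * dij_gen d2 m n (y, s2, t2) * dij_gen d3 n p (z, s3, t3))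
    - coord3 (bracket_tilde d1 d2 d3 x y z) s3 t1 s1 t2 s2 t3
    = (\<Sum>(p1, p2)\<leftarrow>d1 x. \<Sum>(q1, q2)\<leftarrow>d2 y. \<Sum>(r1, r2)\<leftarrow>d3 z.
        M r1 p2 s3 t1 * M p1 q2 s1 t2 * M q1 r2 s2 t3
        - Xv (r1 * p2) s3 t1 * Xv (p1 * q2) s1 t2 * Xv (q1 * r2) s2 t3)"
    unfolding dij_gen_def prod.case coord2_def coord3_bracket_tilde
    by (simp only: sum_list_mult3 sum_list_sum_swap case_prod_unfold factor sum_list_subtractf)
  also have "\<dots> \<in> rep_ideal smult e K \<alpha>"
    unfolding rep_ideal_def case_prod_unfold M_def
    using assms by (intro ideal_gen_sum_list ideal_gen_mult3_diff Xv_mult_in_rep_ideal[unfolded rep_ideal_def])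
  finally show ?thesis .
qed

lemma trX_eval_single_in_rep_ideal:
  fixes smult :: "'k::field \<Rightarrow> 'a::ring_1 \<Rightarrow> 'a"
  assumes "i \<in> {1..dimN \<alpha> K}" "j \<in> {1..dimN \<alpha> K}" "k \<in> {1..dimN \<alpha> K}"
    "l \<in> {1..dimN \<alpha> K}" "u \<in> {1..dimN \<alpha> K}" "v \<in> {1..dimN \<alpha> K}"
  shows "trX_eval \<alpha> K [(d1, d2, d3)] (a, i, j) (b, k, l) (c, u, v)
      - (coord3 (bracketQ [(d1, d2, d3)] a b c) u j i l k v
         - coord3 (bracketQ [(d1, d2, d3)] a c b) k j i v u l)
    \<in> rep_ideal smult e K \<alpha>"
proof -
  let ?S = "{1..dimN \<alpha> K}"
  define W where "W f1 f2 f3 = (\<Sum>p\<in>?S. \<Sum>m\<in>?S. \<Sum>n\<in>?S.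
      dij_gen d1 p m f1 * dij_gen d2 m n f2 * dij_gen d3 n p f3 :: ('a, 'k) rpoly)" for f1 f2 f3
  define C where "C x y z = (coord3 (bracket_tilde d1 d2 d3 x y z) :: _ \<Rightarrow> _ \<Rightarrow> _ \<Rightarrow> _ \<Rightarrow> _ \<Rightarrow> _ \<Rightarrow> ('a, 'k) rpoly)"
    for x y z
  have W_C: "W (x, s1, t1) (y, s2, t2) (z, s3, t3) - C x y z s3 t1 s1 t2 s2 t3 \<in> rep_ideal smult e K \<alpha>"
    if "s1 \<in> ?S" "t1 \<in> ?S" "s2 \<in> ?S" "t2 \<in> ?S" "s3 \<in> ?S" "t3 \<in> ?S" for x y z s1 t1 s2 t2 s3 t3
    unfolding W_def C_def using that by (rule trace_dij_gen3_in_rep_ideal)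
  have trX: "trX_eval \<alpha> K [(d1, d2, d3)] (a, i, j) (b, k, l) (c, u, v)
    = W (a, i, j) (b, k, l) (c, u, v) - W (a, i, j) (c, u, v) (b, k, l) - W (b, k, l) (a, i, j) (c, u, v)
      + W (b, k, l) (c, u, v) (a, i, j) + W (c, u, v) (a, i, j) (b, k, l) - W (c, u, v) (b, k, l) (a, i, j)"
    unfolding trX_eval_def wedge3_eval_expand W_def by (simp add: sum.distrib sum_subtractf)
  have "trX_eval \<alpha> K [(d1, d2, d3)] (a, i, j) (b, k, l) (c, u, v)
      - (coord3 (bracketQ [(d1, d2, d3)] a b c) u j i l k v
         - coord3 (bracketQ [(d1, d2, d3)] a c b) k j i v u l)
    = (W (a, i, j) (b, k, l) (c, u, v) - C a b c u j i l k v)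
      - (W (a, i, j) (c, u, v) (b, k, l) - C a c b k j i v u l)
      - (W (b, k, l) (a, i, j) (c, u, v) - C b a c u l k j i v)
      + (W (b, k, l) (c, u, v) (a, i, j) - C b c a i l k v u j)
      + (W (c, u, v) (a, i, j) (b, k, l) - C c a b k v u j i l)
      - (W (c, u, v) (b, k, l) (a, i, j) - C c b a i v u l k j)"
    unfolding trX bracketQ_def C_def by (simp add: coord3_append coord3_tau3 coord3_tau3_tau3 algebra_simps)
  also have "\<dots> \<in> rep_ideal smult e K \<alpha>"
    unfolding rep_ideal_def using assms by (intro ideal_gen_add ideal_gen_diff W_C[unfolded rep_ideal_def])
  finally show ?thesis .
qed

lemma trX_eval_in_rep_ideal:
  fixes smult :: "'k::field \<Rightarrow> 'a::ring_1 \<Rightarrow> 'a"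
  assumes "i \<in> {1..dimN \<alpha> K}" "j \<in> {1..dimN \<alpha> K}" "k \<in> {1..dimN \<alpha> K}"
    "l \<in> {1..dimN \<alpha> K}" "u \<in> {1..dimN \<alpha> K}" "v \<in> {1..dimN \<alpha> K}"
  shows "trX_eval \<alpha> K Q (a, i, j) (b, k, l) (c, u, v)
      - (coord3 (bracketQ Q a b c) u j i l k v - coord3 (bracketQ Q a c b) k j i v u l)
    \<in> rep_ideal smult e K \<alpha>"
proof (induction Q)
  case Nil
  show ?case by (simp add: trX_eval_def bracketQ_def coord3_def rep_ideal_def ideal_gen_zero)
next
  case (Cons q Q)
  obtain d1 d2 d3 where q: "q = (d1, d2, d3)" by (cases q)
  have trX_split: "trX_eval \<alpha> K (q # Q) f1 f2 f3 = trX_eval \<alpha> K [q] f1 f2 f3 + trX_eval \<alpha> K Q f1 f2 f3"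
    for f1 f2 f3 :: "'a \<times> nat \<times> nat"
    by (simp add: trX_eval_def)
  have bracketQ_split: "bracketQ (q # Q) x y z = bracketQ [q] x y z @ bracketQ Q x y z" for x y z
    by (simp add: bracketQ_def)
  from trX_eval_single_in_rep_ideal[OF assms, of d1 d2 d3 a b c smult e] Cons.IH
  have "(trX_eval \<alpha> K [q] (a, i, j) (b, k, l) (c, u, v)
      - (coord3 (bracketQ [q] a b c) u j i l k v - coord3 (bracketQ [q] a c b) k j i v u l))
    + (trX_eval \<alpha> K Q (a, i, j) (b, k, l) (c, u, v)
      - (coord3 (bracketQ Q a b c) u j i l k v - coord3 (bracketQ Q a c b) k j i v u l))
    \<in> rep_ideal smult e K \<alpha>"
    unfolding q rep_ideal_def by (rule ideal_gen_add)
  then show ?case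
    unfolding trX_split bracketQ_split coord3_append by (simp add: algebra_simps)
qed

theorem lemma5p3:
  fixes smult :: "'k::field_char_0 \<Rightarrow> 'a::ring_1 \<Rightarrow> 'a"
    and e :: "nat \<Rightarrow> 'a" and K :: nat and \<alpha> :: "nat \<Rightarrow> nat"
    and Q :: "(('a \<Rightarrow> ('a \<times> 'a) list) \<times> ('a \<Rightarrow> ('a \<times> 'a) list) \<times> ('a \<Rightarrow> ('a \<times> 'a) list)) list"
    and a b c :: 'a and i j k l u v :: nat
  assumes "kalg smult"
    and "idem_family e K"
    and "fin_gen_over_B smult e K"
    and "\<forall>(d1, d2, d3) \<in> set Q. dder smult e K d1 \<and> dder smult e K d2 \<and> dder smult e K d3"
    and "i \<in> {1..dimN \<alpha> K}" and "j \<in> {1..dimN \<alpha> K}" and "k \<in> {1..dimN \<alpha> K}"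
    and "l \<in> {1..dimN \<alpha> K}" and "u \<in> {1..dimN \<alpha> K}" and "v \<in> {1..dimN \<alpha> K}"
  shows "(trX_eval \<alpha> K Q (a, i, j) (b, k, l) (c, u, v) :: ('a, 'k) rpoly)
           - (coord3 (bracketQ Q a b c) u j i l k v - coord3 (bracketQ Q a c b) k j i v u l)
         \<in> rep_ideal smult e K \<alpha>"
  using assms(5-10) by (rule trX_eval_in_rep_ideal)

end
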